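(* The minimal word (with respect to alphabetical order) of any equivalence class of words under $\sim$ is reduced.
   Context: $\mathcal{A}$ is the free associative $\mathbb{C}$-algebra on noncommuting generators $L,R$; words are finite products of these letters and a subword is a contiguous block of letters. A word is balanced if it contains equally many $L$'s and $R$'s. $\mathcal{J}$ is the two-sided ideal generated by $\{FG-GF : F,G \text{ nonempty balanced words}\}$, and $X\sim Y$ means $X-Y\in\mathcal{J}$; each equivalence class is finite. Alphabetical order is the lexicographic order with $L$ before $R$, a proper prefix preceding its extensions. A word is prime if it is nonempty, balanced, and not a product of two nonempty balanced words. For balanced $W=a_1\cdots a_n$, $e_k(W)=\sum_{i=1}^k\overline{a_i}$ with $\overline{R}=1$, $\overline{L}=-1$. A prime $P$ of length $n$ is an upper prime if $e_k(P)>0$ for $1\le k\le n-1$, and a lower prime if $e_k(P)<0$ for $1\le k\le n-1$. A word is reduced if it contains no subword $UD$ with $U$ an upper prime and $D$ a lower prime. *)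

theory Defs
  imports Complex_Main
begin

datatype letter = L | R

type_synonym word = "letter list"

text \<open>Elements of the free associative algebra over the complex numbers on the
noncommuting generators L, R, represented as coefficient functions on words
(only finitely supported ones arise below).\<close>

definition wvec :: "word \<Rightarrow> (word \<Rightarrow> complex)" where
  "wvec w = (\<lambda>u. if u = w then 1 else 0)"

definition balanced :: "word \<Rightarrow> bool" where
  "balanced w \<longleftrightarrow> count_list w L = count_list w R"

text \<open>The two-sided ideal J generated by FG - GF (F, G nonempty balanced words).
Since words span the algebra, J is the complex linear span of the elements
U (FG - GF) V with U, V words.\<close>

inductive_set J :: "(word \<Rightarrow> complex) set" where
  J_zero: "(\<lambda>_. 0) \<in> J"
| J_gen: "\<lbrakk>F \<noteq> []; G \<noteq> []; balanced F; balanced G\<rbrakk> \<Longrightarrow>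
     (\<lambda>u. c * (wvec (U @ F @ G @ V) u - wvec (U @ G @ F @ V) u)) \<in> J"
| J_add: "\<lbrakk>x \<in> J; y \<in> J\<rbrakk> \<Longrightarrow> (\<lambda>u. x u + y u) \<in> J"

definition wequiv :: "word \<Rightarrow> word \<Rightarrow> bool" (infix "\<approx>" 50) where
  "X \<approx> Y \<longleftrightarrow> (\<lambda>u. wvec X u - wvec Y u) \<in> J"

definition alph_less :: "word \<Rightarrow> word \<Rightarrow> bool" where
  "alph_less u v \<longleftrightarrow>
     (\<exists>w. w \<noteq> [] \<and> v = u @ w) \<or>
     (\<exists>p s t. u = p @ L # s \<and> v = p @ R # t)"

definition alph_le :: "word \<Rightarrow> word \<Rightarrow> bool" where
  "alph_le u v \<longleftrightarrow> u = v \<or> alph_less u v"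

definition prime_word :: "word \<Rightarrow> bool" where
  "prime_word P \<longleftrightarrow> P \<noteq> [] \<and> balanced P \<and>
     \<not> (\<exists>A B. A \<noteq> [] \<and> B \<noteq> [] \<and> balanced A \<and> balanced B \<and> P = A @ B)"

definition lbar :: "letter \<Rightarrow> int" where
  "lbar a = (if a = R then 1 else -1)"

definition ek :: "nat \<Rightarrow> word \<Rightarrow> int" where
  "ek k W = (\<Sum>i<k. lbar (W ! i))"

definition upper_prime :: "word \<Rightarrow> bool" where
  "upper_prime P \<longleftrightarrow> prime_word P \<and> (\<forall>k. 1 \<le> k \<and> k \<le> length P - 1 \<longrightarrow> ek k P > 0)"

definition lower_prime :: "word \<Rightarrow> bool" where
  "lower_prime P \<longleftrightarrow> prime_word P \<and> (\<forall>k. 1 \<le> k \<and> k \<le> length P - 1 \<longrightarrow> ek k P < 0)"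

definition reduced :: "word \<Rightarrow> bool" where
  "reduced W \<longleftrightarrow> \<not> (\<exists>A U D B. W = A @ U @ D @ B \<and> upper_prime U \<and> lower_prime D)"

end

theory Submission
  imports Defs
begin

text \<open>An upper prime starts with R and a lower prime with L. Both are nonempty and
balanced, so an occurrence A U D B with U upper and D lower is equivalent to
A D U B, which is alphabetically smaller because the two words first differ at the
first letter of U versus D.\<close>

lemma balanced_length_ge_2:
  assumes "balanced w" and "w \<noteq> []"
  shows "2 \<le> length w"
  using assms unfolding balanced_def
  by (cases w; cases "tl w"; cases "hd w") auto

lemma upper_prime_Cons_R:
  assumes "upper_prime U"
  obtains U' where "U = R # U'"
proof -
  \<comment> \<open>the sign condition on e_1 only constrains words of length at least 2\<close>
  have "2 \<le> length U"
    using assms balanced_length_ge_2 by (auto simp: upper_prime_def prime_word_def)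
  with assms have "U \<noteq> []" and "ek 1 U > 0"
    by (auto simp: upper_prime_def)
  then show thesis
    using that by (cases U; cases "hd U") (auto simp: ek_def lbar_def)
qed

lemma lower_prime_Cons_L:
  assumes "lower_prime D"
  obtains D' where "D = L # D'"
proof -
  have "2 \<le> length D"
    using assms balanced_length_ge_2 by (auto simp: lower_prime_def prime_word_def)
  with assms have "D \<noteq> []" and "ek 1 D < 0"
    by (auto simp: lower_prime_def)
  then show thesis
    using that by (cases D; cases "hd D") (auto simp: ek_def lbar_def)
qed

lemma wequiv_swap_balanced:
  assumes "F \<noteq> []" "G \<noteq> []" "balanced F" "balanced G"
  shows "U @ F @ G @ V \<approx> U @ G @ F @ V"
  using J_gen[OF assms, of 1 U V] by (simp add: wequiv_def)

lemma alph_less_Cons_Cons: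
  "alph_less (a # u) (b # v) \<longleftrightarrow> (a = L \<and> b = R) \<or> (a = b \<and> alph_less u v)"
  by (auto simp: alph_less_def Cons_eq_append_conv)

lemma alph_less_append_same: "alph_less (p @ u) (p @ v) \<longleftrightarrow> alph_less u v"
  by (induction p) (auto simp: alph_less_Cons_Cons)

lemma not_alph_le_R_L: "\<not> alph_le (p @ R # s) (p @ L # t)"
  by (simp add: alph_le_def alph_less_append_same alph_less_Cons_Cons)

theorem lemma6p2:
  fixes W :: word
  assumes "\<forall>Y. W \<approx> Y \<longrightarrow> alph_le W Y"
  shows "reduced W"
  unfolding reduced_def
proof
  assume "\<exists>A U D B. W = A @ U @ D @ B \<and> upper_prime U \<and> lower_prime D"
  then obtain A U D B where W: "W = A @ U @ D @ B" and U: "upper_prime U" and D: "lower_prime D"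
    by blast
  obtain U' where U': "U = R # U'" using U by (rule upper_prime_Cons_R)
  obtain D' where D': "D = L # D'" using D by (rule lower_prime_Cons_L)
  have "W \<approx> A @ D @ U @ B"
    unfolding W using U D
    by (intro wequiv_swap_balanced) (auto simp: upper_prime_def lower_prime_def prime_word_def)
  with assms have "alph_le W (A @ D @ U @ B)" by blast
  with not_alph_le_R_L[of A "U' @ D @ B" "D' @ U @ B"] show False
    by (simp add: W U' D')
qed

end
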